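(* Let $\mathbb{I}>0$, $\xi>0$, and for $\ell>0$ let $g_\xi(\ell)=4\ell^2\int_0^\infty u^2\,\Phi\big(-\frac{u\ell\xi\sqrt{\mathbb{I}}}{2}\big)\phi(u)\,du$. Then $g_\xi$ is maximized at $\ell_{opt}=\frac{2.426}{\xi\sqrt{\mathbb{I}}}$ (constant to three decimals), and $$\alpha_{opt}=4\int_0^\infty\Phi\Big(-\frac{u\ell_{opt}\xi\sqrt{\mathbb{I}}}{2}\Big)\phi(u)\,du=0.439$$ up to three decimal places.
   Context: $\Phi,\phi$ are the standard normal cdf and density. $g_\xi$ is the diffusion speed of the limiting diffusion of additive TMCMC for independent, non-identically scaled targets $\prod_j\theta_j(d)f(\theta_j(d)x_j)$, where $\mathbb{I}=E_f[(f'/f)^2]$ and $\xi$ is a limiting constant determined by the scalings. *)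

theory Defs
  imports "HOL-Probability.Probability"
begin

definition Phi :: "real \<Rightarrow> real" where
  "Phi x = (LBINT t:{..x}. std_normal_density t)"

definition g_speed :: "real \<Rightarrow> real \<Rightarrow> real \<Rightarrow> real" where
  "g_speed II xi l = 4 * l\<^sup>2 *
     (LBINT u:{0..}. u\<^sup>2 * Phi (- (u * l * xi * sqrt II) / 2) * std_normal_density u)"

definition alpha_acc :: "real \<Rightarrow> real \<Rightarrow> real \<Rightarrow> real" where
  "alpha_acc II xi l = 4 *
     (LBINT u:{0..}. Phi (- (u * l * xi * sqrt II) / 2) * std_normal_density u)"

end

theory Submission
  imports Defs "HOL-Real_Asymp.Real_Asymp"
begin

text \<open>Put \<open>k = \<xi> \<surd>\<I> / 2\<close>. Writing \<open>\<Phi>(-s u) = u \<integral>\<^sub>s\<^sup>\<infinity> \<phi>(w u) dw\<close> and exchanging the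
  order of integration, the inner integrals over \<open>u\<close> are elementary Gaussian moments and the
  outer ones are rational functions of \<open>w\<close> with \<open>arctan\<close> as antiderivative. This gives
  \<open>g\<^sub>\<xi>(\<ell>) = 2 G(k \<ell>) / (\<pi> k\<^sup>2)\<close> with \<open>G(s) = s\<^sup>2 (\<pi>/2 - arctan s - s/(1+s\<^sup>2))\<close>, and
  \<open>\<alpha> = 1 - 2 arctan(k \<ell>) / \<pi>\<close>.
  Now \<open>G' = 2 s K\<close> with \<open>K' = (s\<^sup>2 - 3)/(1+s\<^sup>2)\<^sup>3\<close> and \<open>K \<rightarrow> 0\<close> at infinity, so \<open>K\<close> decreases
  on \<open>[0, \<surd>3]\<close> and is negative beyond \<open>\<surd>3\<close>: its unique positive zero is the unique
  maximiser of \<open>G\<close>. Since \<open>arctan ((1+y)/(1-y)) = \<pi>/4 + arctan y\<close>, alternating-series bounds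
  for \<open>arctan\<close> at small \<open>y\<close> give \<open>K(1.21275) > 0 > K(1.21325)\<close>, which pins down
  \<open>\<ell>\<^sub>o\<^sub>p\<^sub>t \<xi> \<surd>\<I> = 2 k \<ell>\<^sub>o\<^sub>p\<^sub>t\<close> and \<open>\<alpha>\<^sub>o\<^sub>p\<^sub>t\<close>.\<close>

lemma nn_integral_Phi:
  "ennreal (Phi x) = (\<integral>\<^sup>+t. ennreal (std_normal_density t * indicator {..x} t) \<partial>lborel)"
proof -
  have i: "integrable lborel (\<lambda>t. std_normal_density t * indicator {..x} t)"
    by (intro integrable_real_mult_indicator) auto
  have "Phi x = (\<integral>t. std_normal_density t * indicator {..x} t \<partial>lborel)"
    unfolding Phi_def set_lebesgue_integral_def by (simp add: mult.commute)
  then show ?thesis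
    using nn_integral_eq_integral[OF i] by simp
qed

lemma Phi_nonneg: "Phi x \<ge> 0"
  unfolding Phi_def set_lebesgue_integral_def
  by (intro Bochner_Integration.integral_nonneg) (simp add: indicator_def)

lemma mono_Phi: "mono Phi"
proof
  fix x y :: real
  assume "x \<le> y"
  then have "ennreal (Phi x) \<le> ennreal (Phi y)"
    unfolding nn_integral_Phi by (intro nn_integral_mono) (auto simp: indicator_def)
  then show "Phi x \<le> Phi y"
    using Phi_nonneg[of y] by simp
qed

lemma borel_measurable_Phi [measurable]: "Phi \<in> borel_measurable borel"
  by (rule borel_measurable_mono[OF mono_Phi])

lemma nn_integral_Phi_scaled:
  assumes "u > 0"
  shows "ennreal (Phi (-(s*u))) =
    (\<integral>\<^sup>+w. ennreal (u * std_normal_density (w*u) * indicator {s..} w) \<partial>lborel)"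
proof -
  have "ennreal (Phi (-(s*u))) = \<bar>-u\<bar> * (\<integral>\<^sup>+w. ennreal (std_normal_density (0 + (-u)*w) *
      indicator {..-(s*u)} (0 + (-u)*w)) \<partial>lborel)"
    unfolding nn_integral_Phi by (rule nn_integral_real_affine) (use assms in auto)
  also have "\<dots> = (\<integral>\<^sup>+w. ennreal u * ennreal (std_normal_density (w*u) * indicator {s..} w) \<partial>lborel)"
    using assms by (subst nn_integral_cmult)
      (auto intro!: nn_integral_cong simp: std_normal_density_def indicator_def mult.commute)
  also have "\<dots> = (\<integral>\<^sup>+w. ennreal (u * std_normal_density (w*u) * indicator {s..} w) \<partial>lborel)"
    using assms by (intro nn_integral_cong) (simp add: ennreal_mult mult.assoc)
  finally show ?thesis .
qed

lemma std_normal_density_mult_scaled: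
  "std_normal_density u * std_normal_density (w*u) = exp (-((1+w\<^sup>2)*u\<^sup>2/2)) / (2*pi)"
proof -
  have "sqrt (2*pi) * sqrt (2*pi) = 2*pi" by simp
  then show ?thesis
    unfolding std_normal_density_def by (simp add: field_simps exp_add[symmetric] power_mult_distrib)
qed

lemma nn_integral_gaussian_moment_1:
  assumes "a > 0" "b \<ge> 0"
  shows "(\<integral>\<^sup>+u. ennreal (b * u * exp (-(a*u\<^sup>2/2))) * indicator {0..} u \<partial>lborel) = ennreal (b/a)"
proof -
  have "(\<integral>\<^sup>+u. ennreal (b * u * exp (-(a*u\<^sup>2/2))) * indicator {0..} u \<partial>lborel)
      = 0 - (- b * exp (-(a*0\<^sup>2/2)) / a)"
  proof (rule nn_integral_FTC_atLeast[where F="\<lambda>u. - b * exp (-(a*u\<^sup>2/2)) / a"])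
    show "((\<lambda>u. - b * exp (-(a*u\<^sup>2/2)) / a) \<longlongrightarrow> 0) at_top"
      using assms by real_asymp
  qed (use assms in \<open>auto intro!: derivative_eq_intros simp: field_simps\<close>)
  then show ?thesis by simp
qed

lemma nn_integral_gaussian_moment_3:
  assumes "a > 0" "b \<ge> 0"
  shows "(\<integral>\<^sup>+u. ennreal (b * u^3 * exp (-(a*u\<^sup>2/2))) * indicator {0..} u \<partial>lborel) = ennreal (2*b/a\<^sup>2)"
proof -
  have "(\<integral>\<^sup>+u. ennreal (b * u^3 * exp (-(a*u\<^sup>2/2))) * indicator {0..} u \<partial>lborel)
      = 0 - (- b * (0\<^sup>2/a + 2/a\<^sup>2) * exp (-(a*0\<^sup>2/2)))"
  proof (rule nn_integral_FTC_atLeast[where F="\<lambda>u. - b * (u\<^sup>2/a + 2/a\<^sup>2) * exp (-(a*u\<^sup>2/2))"])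
    show "((\<lambda>u. - b * (u\<^sup>2/a + 2/a\<^sup>2) * exp (-(a*u\<^sup>2/2))) \<longlongrightarrow> 0) at_top"
      using assms by real_asymp
  qed (use assms in \<open>auto intro!: derivative_eq_intros simp: field_simps power2_eq_square power3_eq_cube\<close>)
  then show ?thesis by (simp add: mult.commute)
qed

lemma nn_integral_std_normal_density_product_moment_1:
  "(\<integral>\<^sup>+u. ennreal (u^Suc 0 * (std_normal_density u * std_normal_density (w*u))) *
      indicator {0..} u \<partial>lborel) = ennreal (1 / (2*pi*(1+w\<^sup>2)))"
proof -
  have "(\<integral>\<^sup>+u. ennreal (u^Suc 0 * (std_normal_density u * std_normal_density (w*u))) *
      indicator {0..} u \<partial>lborel)
      = (\<integral>\<^sup>+u. ennreal (1/(2*pi) * u * exp (-((1+w\<^sup>2)*u\<^sup>2/2))) * indicator {0..} u \<partial>lborel)"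
    by (simp add: std_normal_density_mult_scaled)
  also have "\<dots> = ennreal (1/(2*pi) / (1+w\<^sup>2))"
    by (rule nn_integral_gaussian_moment_1) (auto simp: add_pos_nonneg)
  finally show ?thesis by simp
qed

lemma nn_integral_std_normal_density_product_moment_3:
  "(\<integral>\<^sup>+u. ennreal (u^Suc 2 * (std_normal_density u * std_normal_density (w*u))) *
      indicator {0..} u \<partial>lborel) = ennreal (1 / (pi*(1+w\<^sup>2)\<^sup>2))"
proof -
  have "(\<integral>\<^sup>+u. ennreal (u^Suc 2 * (std_normal_density u * std_normal_density (w*u))) *
      indicator {0..} u \<partial>lborel)
      = (\<integral>\<^sup>+u. ennreal (1/(2*pi) * u^3 * exp (-((1+w\<^sup>2)*u\<^sup>2/2))) * indicator {0..} u \<partial>lborel)"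
    by (simp add: std_normal_density_mult_scaled numeral_3_eq_3)
  also have "\<dots> = ennreal (2 * (1/(2*pi)) / (1+w\<^sup>2)\<^sup>2)"
    by (rule nn_integral_gaussian_moment_3) (auto simp: add_pos_nonneg)
  finally show ?thesis by simp
qed

lemma Phi_moment_integrand_eq_nn_integral:
  assumes "u > 0"
  shows "ennreal (u^k * Phi (-(s*u)) * std_normal_density u) =
    (\<integral>\<^sup>+w. ennreal (u^Suc k * (std_normal_density u * std_normal_density (w*u))) *
      indicator {s..} w \<partial>lborel)"
proof -
  have "ennreal (u^k * Phi (-(s*u)) * std_normal_density u)
      = ennreal (u^k * std_normal_density u) * ennreal (Phi (-(s*u)))"
    using assms by (simp add: ennreal_mult[symmetric] Phi_nonneg mult_ac)
  also have "\<dots> = (\<integral>\<^sup>+w. ennreal (u^k * std_normal_density u) *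
      ennreal (u * std_normal_density (w*u) * indicator {s..} w) \<partial>lborel)"
    unfolding nn_integral_Phi_scaled[OF assms] by (rule nn_integral_cmult[symmetric]) simp
  also have "\<dots> = (\<integral>\<^sup>+w. ennreal (u^Suc k * (std_normal_density u * std_normal_density (w*u))) *
      indicator {s..} w \<partial>lborel)"
    using assms by (intro nn_integral_cong) (auto simp: ennreal_mult[symmetric] indicator_def mult_ac)
  finally show ?thesis .
qed

lemma nn_integral_Phi_moment_Tonelli:
  assumes inner: "\<And>w. (\<integral>\<^sup>+u. ennreal (u^Suc k * (std_normal_density u * std_normal_density (w*u))) *
      indicator {0..} u \<partial>lborel) = ennreal (c w)"
  shows "(\<integral>\<^sup>+u. ennreal (indicator {0..} u * (u^k * Phi (-(s*u)) * std_normal_density u)) \<partial>lborel)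
       = (\<integral>\<^sup>+w. ennreal (c w) * indicator {s..} w \<partial>lborel)"
proof -
  let ?f = "\<lambda>u w. ennreal (u^Suc k * (std_normal_density u * std_normal_density (w*u))) *
    indicator {0..} u * indicator {s..} w"
  have "(\<integral>\<^sup>+u. ennreal (indicator {0..} u * (u^k * Phi (-(s*u)) * std_normal_density u)) \<partial>lborel)
      = (\<integral>\<^sup>+u. (\<integral>\<^sup>+w. ?f u w \<partial>lborel) \<partial>lborel)"
  proof (rule nn_integral_cong_AE)
    show "AE u in lborel. ennreal (indicator {0..} u * (u^k * Phi (-(s*u)) * std_normal_density u))
        = (\<integral>\<^sup>+w. ?f u w \<partial>lborel)"
      using AE_lborel_singleton[of 0]
    proof eventually_elim
      case (elim u)
      then consider "u > 0" | "u < 0" by linarith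
      then show ?case
        by cases (auto simp: Phi_moment_integrand_eq_nn_integral intro!: nn_integral_cong)
    qed
  qed
  also have "\<dots> = (\<integral>\<^sup>+w. (\<integral>\<^sup>+u. ?f u w \<partial>lborel) \<partial>lborel)"
    by (rule lborel_pair.Fubini'[symmetric]) measurable
  also have "\<dots> = (\<integral>\<^sup>+w. ennreal (c w) * indicator {s..} w \<partial>lborel)"
    by (intro nn_integral_cong, subst nn_integral_multc) (simp_all only: inner, measurable)
  finally show ?thesis .
qed

lemma set_integral_Phi_moment:
  assumes "\<And>w. (\<integral>\<^sup>+u. ennreal (u^Suc k * (std_normal_density u * std_normal_density (w*u))) *
      indicator {0..} u \<partial>lborel) = ennreal (c w)"
  shows "(LBINT u:{0..}. u^k * Phi (-(s*u)) * std_normal_density u)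
       = enn2real (\<integral>\<^sup>+w. ennreal (c w) * indicator {s..} w \<partial>lborel)"
proof -
  have "(LBINT u:{0..}. u^k * Phi (-(s*u)) * std_normal_density u)
      = enn2real (\<integral>\<^sup>+u. ennreal (indicator {0..} u * (u^k * Phi (-(s*u)) * std_normal_density u)) \<partial>lborel)"
    unfolding set_lebesgue_integral_def real_scaleR_def
    by (rule integral_eq_nn_integral) (auto simp: Phi_nonneg indicator_def)
  then show ?thesis
    unfolding nn_integral_Phi_moment_Tonelli[OF assms] .
qed

lemma DERIV_nonneg_imp_le_limit:
  fixes f f' :: "real \<Rightarrow> real"
  assumes deriv: "\<And>t. x \<le> t \<Longrightarrow> (f has_real_derivative f' t) (at t)"
    and nonneg: "\<And>t. x \<le> t \<Longrightarrow> 0 \<le> f' t"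
    and lim: "(f \<longlongrightarrow> L) at_top"
  shows "f x \<le> L"
proof (rule tendsto_lowerbound[OF lim])
  show "\<forall>\<^sub>F y in at_top. f x \<le> f y"
    using eventually_ge_at_top[of x]
  proof eventually_elim
    case (elim y)
    show ?case
    proof (rule DERIV_nonneg_imp_nondecreasing[OF elim])
      fix t assume "x \<le> t"
      then show "\<exists>d. (f has_real_derivative d) (at t) \<and> 0 \<le> d"
        using deriv nonneg by blast
    qed
  qed
qed simp

lemma DERIV_pos_imp_less_limit:
  fixes f f' :: "real \<Rightarrow> real"
  assumes deriv: "\<And>t. x \<le> t \<Longrightarrow> (f has_real_derivative f' t) (at t)"
    and pos: "\<And>t. x \<le> t \<Longrightarrow> 0 < f' t"
    and lim: "(f \<longlongrightarrow> L) at_top"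
  shows "f x < L"
proof -
  have "f x < f (x + 1)"
  proof (rule DERIV_pos_imp_increasing[of x "x + 1" f])
    fix t assume "x \<le> t" "t \<le> x + 1"
    then show "\<exists>d. (f has_real_derivative d) (at t) \<and> 0 < d"
      using deriv pos by blast
  qed simp
  also have "f (x + 1) \<le> L"
  proof (rule DERIV_nonneg_imp_le_limit[where f' = f', OF _ _ lim])
    fix t assume "x + 1 \<le> t"
    then show "(f has_real_derivative f' t) (at t)" "0 \<le> f' t"
      using deriv[of t] pos[of t] by auto
  qed
  finally show ?thesis .
qed

lemma DERIV_arctan_plus_rational:
  "((\<lambda>w. w/(1+w\<^sup>2) + arctan w) has_real_derivative 2/(1+x\<^sup>2)\<^sup>2) (at x)"
proof -
  have "1 + x\<^sup>2 \<noteq> 0"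
    by (metis power_one sum_power2_eq_zero_iff zero_neq_one)
  then have "((\<lambda>w. w/(1+w\<^sup>2) + arctan w) has_real_derivative
      (1 * (1+x\<^sup>2) - x * (2*x)) / (1+x\<^sup>2)\<^sup>2 + (1+x\<^sup>2) / (1+x\<^sup>2)\<^sup>2) (at x)"
    by (auto intro!: derivative_eq_intros simp: power2_eq_square inverse_eq_divide)
  moreover have "(1 * (1+x\<^sup>2) - x * (2*x)) + (1+x\<^sup>2) = 2"
    by (simp add: power2_eq_square)
  ultimately show ?thesis
    by (simp only: add_divide_distrib[symmetric])
qed

lemma nn_integral_atLeast_inverse_1_plus_square:
  "(\<integral>\<^sup>+w. ennreal (1 / (2*pi*(1+w\<^sup>2))) * indicator {s..} w \<partial>lborel) = ennreal ((pi/2 - arctan s) / (2*pi))"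
proof -
  have "(\<integral>\<^sup>+w. ennreal (1 / (2*pi*(1+w\<^sup>2))) * indicator {s..} w \<partial>lborel)
      = (pi/2)/(2*pi) - arctan s / (2*pi)"
  proof (rule nn_integral_FTC_atLeast[where F="\<lambda>w. arctan w / (2*pi)"])
    show "DERIV (\<lambda>w. arctan w / (2*pi)) x :> 1 / (2*pi*(1+x\<^sup>2))" for x
      using DERIV_cdivide[OF DERIV_arctan[of x], of "2*pi"] by (simp add: inverse_eq_divide mult.commute)
    show "((\<lambda>w. arctan w / (2*pi)) \<longlongrightarrow> (pi/2)/(2*pi)) at_top"
      by (intro tendsto_divide tendsto_arctan_at_top tendsto_const) auto
  qed (auto simp: add_pos_nonneg)
  then show ?thesis by (simp add: diff_divide_distrib)
qed

lemma nn_integral_atLeast_inverse_1_plus_square_squared: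
  "(\<integral>\<^sup>+w. ennreal (1 / (pi*(1+w\<^sup>2)\<^sup>2)) * indicator {s..} w \<partial>lborel)
     = ennreal ((pi/2 - arctan s - s/(1+s\<^sup>2)) / (2*pi))"
proof -
  have "(\<integral>\<^sup>+w. ennreal (1 / (pi*(1+w\<^sup>2)\<^sup>2)) * indicator {s..} w \<partial>lborel)
      = (pi/2)/(2*pi) - (s/(1+s\<^sup>2) + arctan s) / (2*pi)"
  proof (rule nn_integral_FTC_atLeast[where F="\<lambda>w. (w/(1+w\<^sup>2) + arctan w) / (2*pi)"])
    show "DERIV (\<lambda>w. (w/(1+w\<^sup>2) + arctan w) / (2*pi)) x :> 1 / (pi*(1+x\<^sup>2)\<^sup>2)" for x
      using DERIV_cdivide[OF DERIV_arctan_plus_rational[of x], of "2*pi"] by (simp add: mult_ac)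
    show "((\<lambda>w. (w/(1+w\<^sup>2) + arctan w) / (2*pi)) \<longlongrightarrow> (pi/2)/(2*pi)) at_top"
      by real_asymp
  qed auto
  moreover have "(pi/2)/(2*pi) - (s/(1+s\<^sup>2) + arctan s) / (2*pi) = (pi/2 - arctan s - s/(1+s\<^sup>2)) / (2*pi)"
    unfolding diff_divide_distrib add_divide_distrib by linarith
  ultimately show ?thesis by simp
qed

lemma arctan_plus_rational_le: "s/(1+s\<^sup>2) + arctan s \<le> pi/2"
proof (rule DERIV_nonneg_imp_le_limit[OF DERIV_arctan_plus_rational])
  show "((\<lambda>w. w/(1+w\<^sup>2) + arctan w) \<longlongrightarrow> pi/2) at_top"
    by real_asymp
qed simp

definition arctan_poly :: "nat \<Rightarrow> real \<Rightarrow> real" where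
  "arctan_poly n x = (\<Sum>k<n. (-1)^k / real (2*k+1) * x^(2*k+1))"

lemma arctan_alternating_bounds:
  assumes "0 \<le> x" "x \<le> 1"
  shows "arctan_poly (2*n) x \<le> arctan x" and "arctan x \<le> arctan_poly (2*n+1) x"
proof -
  let ?a = "\<lambda>k. 1 / real (k*2+1) * x^(k*2+1)"
  have x: "\<bar>x\<bar> \<le> 1" using assms by simp
  have a0: "?a \<longlonglongrightarrow> 0" by (rule zeroseq_arctan_series[OF x])
  have nonneg: "0 \<le> ?a k" for k using assms by simp
  have dec: "?a (Suc k) \<le> ?a k" for k
    using assms by (intro mult_mono power_decreasing frac_le) auto
  have poly: "arctan_poly m x = (\<Sum>k<m. (-1)^k * ?a k)" for m
    unfolding arctan_poly_def by (simp add: mult_ac)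
  show "arctan_poly (2*n) x \<le> arctan x" "arctan x \<le> arctan_poly (2*n+1) x"
    unfolding poly arctan_series[OF x]
    by (rule summable_Leibniz'(2)[OF a0 nonneg dec], rule summable_Leibniz'(4)[OF a0 nonneg dec])
qed

lemma arctan_pi_4_plus:
  assumes "0 \<le> y" "y < 1"
  shows "arctan ((1+y) / (1-y)) = pi/4 + arctan y"
  using arctan_add[of 1 y] assms by (simp add: arctan_one)

lemma g_speed_closed_form:
  assumes "k = xi * sqrt II / 2"
  shows "g_speed II xi l = 2 * l\<^sup>2 * (pi/2 - arctan (k*l) - k*l/(1+(k*l)\<^sup>2)) / pi"
proof -
  have "(LBINT u:{0..}. u\<^sup>2 * Phi (- (u * l * xi * sqrt II) / 2) * std_normal_density u)
      = (LBINT u:{0..}. u\<^sup>2 * Phi (-((k*l)*u)) * std_normal_density u)"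
    by (simp add: assms mult_ac)
  also have "\<dots> = (pi/2 - arctan (k*l) - k*l/(1+(k*l)\<^sup>2)) / (2*pi)"
  proof -
    have "0 \<le> pi/2 - arctan (k*l) - k*l/(1+(k*l)\<^sup>2)"
      using arctan_plus_rational_le[of "k*l"] by linarith
    then show ?thesis
      unfolding set_integral_Phi_moment[OF nn_integral_std_normal_density_product_moment_3]
        nn_integral_atLeast_inverse_1_plus_square_squared by simp
  qed
  finally show ?thesis
    unfolding g_speed_def by simp
qed

lemma alpha_acc_closed_form:
  assumes "k = xi * sqrt II / 2"
  shows "alpha_acc II xi l = 1 - 2 * arctan (k*l) / pi"
proof -
  have "(LBINT u:{0..}. Phi (- (u * l * xi * sqrt II) / 2) * std_normal_density u)
      = (LBINT u:{0..}. u^0 * Phi (-((k*l)*u)) * std_normal_density u)"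
    by (simp add: assms mult_ac)
  also have "\<dots> = (pi/2 - arctan (k*l)) / (2*pi)"
  proof -
    have "0 \<le> pi/2 - arctan (k*l)"
      using arctan_ubound[of "k*l"] by linarith
    then show ?thesis
      unfolding set_integral_Phi_moment[OF nn_integral_std_normal_density_product_moment_1]
        nn_integral_atLeast_inverse_1_plus_square by simp
  qed
  finally show ?thesis
    unfolding alpha_acc_def by (simp add: field_simps)
qed

definition speed_profile :: "real \<Rightarrow> real" where
  "speed_profile s = s\<^sup>2 * (pi/2 - arctan s - s/(1+s\<^sup>2))"

definition speed_profile_slope :: "real \<Rightarrow> real" where
  "speed_profile_slope s = pi/2 - arctan s - s/(1+s\<^sup>2) - s/(1+s\<^sup>2)\<^sup>2"

lemma g_speed_eq_speed_profile:
  assumes "k = xi * sqrt II / 2" "k > 0"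
  shows "g_speed II xi l = 2 / (pi * k\<^sup>2) * speed_profile (k * l)"
  unfolding g_speed_closed_form[OF assms(1)] speed_profile_def
  using assms(2) by (simp add: power_mult_distrib)

lemma has_real_derivative_speed_profile:
  "(speed_profile has_real_derivative 2 * x * speed_profile_slope x) (at x)"
proof -
  have profile: "speed_profile = (\<lambda>s. s\<^sup>2 * (pi/2 - (s/(1+s\<^sup>2) + arctan s)))"
    by (rule ext) (simp add: speed_profile_def diff_diff_eq add.commute)
  have "((\<lambda>s. s\<^sup>2 * (pi/2 - (s/(1+s\<^sup>2) + arctan s))) has_real_derivative
      2 * x * (pi/2 - (x/(1+x\<^sup>2) + arctan x)) - x\<^sup>2 * (2/(1+x\<^sup>2)\<^sup>2)) (at x)"
    by (rule derivative_eq_intros DERIV_arctan_plus_rational refl | simp)+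
  moreover have "2 * x * (pi/2 - (x/(1+x\<^sup>2) + arctan x)) - x\<^sup>2 * (2/(1+x\<^sup>2)\<^sup>2) = 2 * x * speed_profile_slope x"
    unfolding speed_profile_slope_def by (simp add: algebra_simps power2_eq_square)
  ultimately show ?thesis
    unfolding profile by simp
qed

lemma has_real_derivative_speed_profile_slope:
  "(speed_profile_slope has_real_derivative (x\<^sup>2 - 3) / (1+x\<^sup>2)^3) (at x)"
proof -
  have q: "1 + x\<^sup>2 \<noteq> 0"
    by (metis power_one sum_power2_eq_zero_iff zero_neq_one)
  have slope: "speed_profile_slope = (\<lambda>s. pi/2 - (s/(1+s\<^sup>2) + arctan s) - s/(1+s\<^sup>2)\<^sup>2)"
    by (rule ext) (simp add: speed_profile_slope_def diff_diff_eq add.commute)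
  have "((\<lambda>s. s/(1+s\<^sup>2)\<^sup>2) has_real_derivative
      (1 * (1+x\<^sup>2)\<^sup>2 - (2 * (1+x\<^sup>2) * (2*x)) * x) / ((1+x\<^sup>2)\<^sup>2)^Suc (Suc 0)) (at x)"
    using q by (intro DERIV_quotient) (auto intro!: derivative_eq_intros simp: power2_eq_square)
  moreover have "(1 * (1+x\<^sup>2)\<^sup>2 - (2 * (1+x\<^sup>2) * (2*x)) * x) / ((1+x\<^sup>2)\<^sup>2)^Suc (Suc 0)
      = (1 - 3 * x\<^sup>2) / (1+x\<^sup>2)^3"
    using q by (simp add: divide_simps) (simp add: algebra_simps eval_nat_numeral)
  ultimately have "((\<lambda>s. s/(1+s\<^sup>2)\<^sup>2) has_real_derivative (1 - 3 * x\<^sup>2) / (1+x\<^sup>2)^3) (at x)"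
    by simp
  then have "(speed_profile_slope has_real_derivative 0 - 2/(1+x\<^sup>2)\<^sup>2 - (1 - 3 * x\<^sup>2) / (1+x\<^sup>2)^3) (at x)"
    unfolding slope by (intro DERIV_diff DERIV_const DERIV_arctan_plus_rational)
  moreover have "0 - 2/(1+x\<^sup>2)\<^sup>2 - (1 - 3 * x\<^sup>2) / (1+x\<^sup>2)^3 = (x\<^sup>2 - 3) / (1+x\<^sup>2)^3"
    using q by (simp add: divide_simps) (simp add: algebra_simps eval_nat_numeral)
  ultimately show ?thesis by simp
qed

lemma tendsto_speed_profile_slope: "(speed_profile_slope \<longlongrightarrow> 0) at_top"
  unfolding speed_profile_slope_def by real_asymp

lemma speed_profile_slope_antimono:
  assumes "0 \<le> x" "x \<le> y" "y\<^sup>2 \<le> 3"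
  shows "speed_profile_slope y \<le> speed_profile_slope x"
proof (rule DERIV_nonpos_imp_nonincreasing[OF assms(2)])
  fix t assume t: "x \<le> t" "t \<le> y"
  then have "t\<^sup>2 \<le> 3"
    using assms by (meson order_trans power_mono)
  then have "(t\<^sup>2 - 3) / (1+t\<^sup>2)^3 \<le> 0"
    by (intro divide_nonpos_pos) (auto intro: add_pos_nonneg)
  then show "\<exists>d. (speed_profile_slope has_real_derivative d) (at t) \<and> d \<le> 0"
    using has_real_derivative_speed_profile_slope by blast
qed

lemma speed_profile_slope_neg_beyond_sqrt3:
  assumes "0 \<le> x" "3 < x\<^sup>2"
  shows "speed_profile_slope x < 0"
proof (rule DERIV_pos_imp_less_limit[OF has_real_derivative_speed_profile_slope _ tendsto_speed_profile_slope])
  fix t assume "x \<le> t"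
  then have "3 < t\<^sup>2"
    using assms by (meson less_le_trans power_mono)
  then show "0 < (t\<^sup>2 - 3) / (1+t\<^sup>2)^3"
    by (intro divide_pos_pos) (auto intro: add_pos_nonneg)
qed

lemma arctan_4851_4000_bounds:
  "pi/4 + 95852/1000000 \<le> arctan (4851/4000)"
  "arctan (4851/4000) \<le> pi/4 + 95852699424/1000000000000"
proof -
  have split: "arctan (4851/4000) = pi/4 + arctan (851/8851)"
    using arctan_pi_4_plus[of "851/8851"] by simp
  have "95852/1000000 \<le> arctan_poly (2*2) (851/8851)"
    by (simp add: arctan_poly_def eval_nat_numeral power_divide)
  also have "\<dots> \<le> arctan (851/8851)"
    by (rule arctan_alternating_bounds) auto
  finally show "pi/4 + 95852/1000000 \<le> arctan (4851/4000)"
    unfolding split by simp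
  have "arctan (851/8851) \<le> arctan_poly (2*1+1) (851/8851)"
    by (rule arctan_alternating_bounds) auto
  also have "\<dots> \<le> 95852699424/1000000000000"
    by (simp add: arctan_poly_def eval_nat_numeral power_divide)
  finally show "arctan (4851/4000) \<le> pi/4 + 95852699424/1000000000000"
    unfolding split by simp
qed

lemma arctan_4853_4000_bounds:
  "pi/4 + 96055005588/1000000000000 \<le> arctan (4853/4000)"
  "arctan (4853/4000) \<le> pi/4 + 96056/1000000"
proof -
  have split: "arctan (4853/4000) = pi/4 + arctan (853/8853)"
    using arctan_pi_4_plus[of "853/8853"] by simp
  have "96055005588/1000000000000 \<le> arctan_poly (2*2) (853/8853)"
    by (simp add: arctan_poly_def eval_nat_numeral power_divide)
  also have "\<dots> \<le> arctan (853/8853)"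
    by (rule arctan_alternating_bounds) auto
  finally show "pi/4 + 96055005588/1000000000000 \<le> arctan (4853/4000)"
    unfolding split by simp
  have "arctan (853/8853) \<le> arctan_poly (2*1+1) (853/8853)"
    by (rule arctan_alternating_bounds) auto
  also have "\<dots> \<le> 96056/1000000"
    by (simp add: arctan_poly_def eval_nat_numeral power_divide)
  finally show "arctan (4853/4000) \<le> pi/4 + 96056/1000000"
    unfolding split by simp
qed

lemma speed_profile_slope_4851_4000: "speed_profile_slope (4851/4000) > 0"
proof -
  have "(4851/4000::real) / (1 + (4851/4000)\<^sup>2) + (4851/4000) / (1 + (4851/4000)\<^sup>2)\<^sup>2
      \<le> 689499829593/1000000000000"
    by (simp add: power_divide)
  moreover have "3141592653588/1000000000000 \<le> pi"
    using pi_approx(1) by simp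
  ultimately show ?thesis
    unfolding speed_profile_slope_def using arctan_4851_4000_bounds(2) by linarith
qed

lemma speed_profile_slope_4853_4000: "speed_profile_slope (4853/4000) < 0"
proof -
  have "689348148641/1000000000000
      \<le> (4853/4000::real) / (1 + (4853/4000)\<^sup>2) + (4853/4000) / (1 + (4853/4000)\<^sup>2)\<^sup>2"
    by (simp add: power_divide)
  moreover have "pi \<le> 31415926535899/10000000000000"
    using pi_approx(2) by simp
  ultimately show ?thesis
    unfolding speed_profile_slope_def using arctan_4853_4000_bounds(1) by linarith
qed

lemma speed_profile_slope_pos:
  assumes "0 \<le> x" "x \<le> 4851/4000"
  shows "speed_profile_slope x > 0"
proof -
  have "speed_profile_slope (4851/4000) \<le> speed_profile_slope x"
    using assms by (intro speed_profile_slope_antimono) (auto simp: power_divide)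
  then show ?thesis
    using speed_profile_slope_4851_4000 by linarith
qed

lemma speed_profile_slope_neg:
  assumes "4853/4000 \<le> x"
  shows "speed_profile_slope x < 0"
proof (cases "x\<^sup>2 \<le> 3")
  case True
  then have "speed_profile_slope x \<le> speed_profile_slope (4853/4000)"
    using assms by (intro speed_profile_slope_antimono) auto
  then show ?thesis
    using speed_profile_slope_4853_4000 by linarith
next
  case False
  then show ?thesis
    using assms by (intro speed_profile_slope_neg_beyond_sqrt3) auto
qed

lemma speed_profile_less_left:
  assumes "0 < x" "x < 4851/4000"
  shows "speed_profile x < speed_profile (4851/4000)"
proof (rule DERIV_pos_imp_increasing[OF assms(2)])
  fix t assume "x \<le> t" "t \<le> 4851/4000"
  then have "2 * t * speed_profile_slope t > 0"
    using assms speed_profile_slope_pos[of t] by simp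
  then show "\<exists>d. (speed_profile has_real_derivative d) (at t) \<and> d > 0"
    using has_real_derivative_speed_profile by blast
qed

lemma speed_profile_less_right:
  assumes "4853/4000 < x"
  shows "speed_profile x < speed_profile (4853/4000)"
proof (rule DERIV_neg_imp_decreasing[OF assms])
  fix t assume "4853/4000 \<le> t" "t \<le> x"
  then have "2 * t * speed_profile_slope t < 0"
    using speed_profile_slope_neg[of t] by (simp add: mult_pos_neg)
  then show "\<exists>d. (speed_profile has_real_derivative d) (at t) \<and> d < 0"
    using has_real_derivative_speed_profile by blast
qed

lemma speed_profile_argmax_bounds:
  assumes "s0 > 0" "\<forall>s>0. speed_profile s \<le> speed_profile s0"
  shows "s0 \<in> {4851/4000..4853/4000}"
  using speed_profile_less_left[OF assms(1)] speed_profile_less_right[of s0]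
    assms(2)[rule_format, of "4851/4000"] assms(2)[rule_format, of "4853/4000"]
  by force

lemma speed_profile_has_argmax:
  "\<exists>s0\<in>{4851/4000..4853/4000}. \<forall>s>0. speed_profile s \<le> speed_profile s0"
proof -
  have "continuous_on {4851/4000..4853/4000} speed_profile"
    using has_real_derivative_speed_profile
    by (intro continuous_at_imp_continuous_on) (auto intro: DERIV_isCont)
  then obtain s0 where s0: "s0 \<in> {4851/4000..4853/4000::real}"
    and max: "\<forall>s\<in>{4851/4000..4853/4000}. speed_profile s \<le> speed_profile s0"
    using continuous_attains_sup[of "{4851/4000..4853/4000::real}" speed_profile] by auto
  have "speed_profile s \<le> speed_profile s0" if "s > 0" for s
    using speed_profile_less_left[OF that] speed_profile_less_right[of s]
      max[rule_format, of s] max[rule_format, of "4851/4000"] max[rule_format, of "4853/4000"]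
    by force
  with s0 show ?thesis by blast
qed

lemma argmax_rescale:
  fixes f g :: "real \<Rightarrow> real"
  assumes "c > 0" "k > 0" "\<And>l. f l = c * g (k * l)"
  shows "(\<forall>l>0. f l \<le> f l0) \<longleftrightarrow> (\<forall>s>0. g s \<le> g (k * l0))"
proof
  assume max: "\<forall>l>0. f l \<le> f l0"
  show "\<forall>s>0. g s \<le> g (k * l0)"
  proof (intro allI impI)
    fix s :: real assume "s > 0"
    then have "f (s / k) \<le> f l0" using max assms(2) by simp
    then show "g s \<le> g (k * l0)" using assms by simp
  qed
next
  assume "\<forall>s>0. g s \<le> g (k * l0)"
  then show "\<forall>l>0. f l \<le> f l0" using assms by simp
qed

lemma acceptance_at_argmax:
  assumes "s \<in> {4851/4000..4853/4000}"
  shows "\<bar>1 - 2 * arctan s / pi - 0.439\<bar> \<le> 0.0005"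
proof -
  have "arctan (4851/4000) \<le> arctan s" "arctan s \<le> arctan (4853/4000)"
    using assms by (simp_all add: arctan_le_iff)
  then have "pi/4 + 95852/1000000 \<le> arctan s" "arctan s \<le> pi/4 + 96056/1000000"
    using arctan_4851_4000_bounds(1) arctan_4853_4000_bounds(2) by linarith+
  moreover have "3141592653588/1000000000000 \<le> pi" "pi \<le> 31415926535899/10000000000000"
    using pi_approx by simp_all
  ultimately have "5605/10000 \<le> 2 * arctan s / pi" "2 * arctan s / pi \<le> 5615/10000"
    by (simp_all add: pos_le_divide_eq pos_divide_le_eq)
  moreover have "(0.439::real) = 439/1000" "(0.0005::real) = 5/10000"
    by simp_all
  ultimately show ?thesis
    unfolding abs_le_iff by linarith
qed

theorem corollary3:
  fixes II xi :: real
  assumes "II > 0" and "xi > 0"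
  shows "(\<exists>l_opt > 0. \<forall>l > 0. g_speed II xi l \<le> g_speed II xi l_opt)
       \<and> (\<forall>l_opt > 0. (\<forall>l > 0. g_speed II xi l \<le> g_speed II xi l_opt) \<longrightarrow>
            \<bar>l_opt * xi * sqrt II - 2.426\<bar> \<le> 0.0005 \<and>
            \<bar>alpha_acc II xi l_opt - 0.439\<bar> \<le> 0.0005)"
proof -
  define k where "k = xi * sqrt II / 2"
  have k: "k > 0" using assms by (simp add: k_def)
  have argmax: "(\<forall>l>0. g_speed II xi l \<le> g_speed II xi l0) \<longleftrightarrow>
      (\<forall>s>0. speed_profile s \<le> speed_profile (k * l0))" for l0
    using k by (intro argmax_rescale[of "2 / (pi * k\<^sup>2)"] g_speed_eq_speed_profile[OF k_def k]) auto
  obtain s0 where s0: "s0 \<in> {4851/4000..4853/4000}" "\<forall>s>0. speed_profile s \<le> speed_profile s0"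
    using speed_profile_has_argmax by blast
  have "s0 / k > 0" "\<forall>l>0. g_speed II xi l \<le> g_speed II xi (s0 / k)"
    using s0 k argmax[of "s0 / k"] by auto
  moreover have "\<bar>l0 * xi * sqrt II - 2.426\<bar> \<le> 0.0005 \<and> \<bar>alpha_acc II xi l0 - 0.439\<bar> \<le> 0.0005"
    if "l0 > 0" "\<forall>l>0. g_speed II xi l \<le> g_speed II xi l0" for l0
  proof -
    have kl0: "k * l0 \<in> {4851/4000..4853/4000}"
      using that k argmax[of l0] by (intro speed_profile_argmax_bounds) auto
    have scaling: "l0 * xi * sqrt II = 2 * (k * l0)"
      by (simp add: k_def)
    have "\<bar>2 * (k * l0) - 2.426\<bar> \<le> 0.0005"
      unfolding abs_le_iff using kl0 by simp
    then show ?thesis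
      unfolding scaling alpha_acc_closed_form[OF k_def] using acceptance_at_argmax[OF kl0] by blast
  qed
  ultimately show ?thesis by blast
qed

end
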